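(* For every command $c$ of the While-language, stores $\sigma,\sigma'$ and status flag $\delta$: if $(c,\sigma,\Downarrow)\Rightarrow_G\sigma',\delta$ (inductive interpretation), then $\delta\neq\Uparrow$.
   Context: While-language syntax: variables $x$ range over a countably infinite set $\mathit{Var}$; $n$ ranges over natural numbers; values are $v ::= \mathsf{null}\mid n$ ($\mathsf{null}$ distinct from every natural number); expressions are $e ::= v\mid x\mid e_1\oplus e_2$ with $\oplus\in\{+,-,*\}$, where $\oplus(n_1,n_2)$ is the result of the operation on naturals; commands are $c ::= \mathsf{skip}\mid\mathsf{alloc}\ x\mid x:=e\mid c_1;c_2\mid \mathsf{if}\ e\ c_1\ c_2\mid\mathsf{while}\ e\ c$. A store $\sigma$ is a finite partial map from $\mathit{Var}$ to values, with domain $\mathrm{dom}(\sigma)$, lookup $\sigma(x)$, update $\sigma[x\mapsto v]$. Flag-based big-step semantics: status flags $\delta ::= \Downarrow\mid\Uparrow$ (convergent / divergent). Expression evaluation $(e,\sigma,\delta)\Rightarrow_{GE}v,\delta'$ is the least relation with: $(v,\sigma,\Downarrow)\Rightarrow_{GE}v,\Downarrow$; $(x,\sigma,\Downarrow)\Rightarrow_{GE}\sigma(x),\Downarrow$ if $x\in\mathrm{dom}(\sigma)$; if $(e_1,\sigma,\Downarrow)\Rightarrow_{GE}n_1,\delta$ and $(e_2,\sigma,\delta)\Rightarrow_{GE}n_2,\delta'$ ($n_1,n_2$ naturals) then $(e_1\oplus e_2,\sigma,\Downarrow)\Rightarrow_{GE}\oplus(n_1,n_2),\delta'$; and $(e,\sigma,\Uparrow)\Rightarrow_{GE}v,\Uparrow$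 for every value $v$. The command rules for judgments $(c,\sigma,\delta)\Rightarrow_G\sigma',\delta'$ are: (F-Skip) $(\mathsf{skip},\sigma,\Downarrow)\Rightarrow_G\sigma,\Downarrow$; (F-Alloc) $(\mathsf{alloc}\ x,\sigma,\Downarrow)\Rightarrow_G\sigma[x\mapsto\mathsf{null}],\Downarrow$ if $x\notin\mathrm{dom}(\sigma)$; (F-Assign) $(x:=e,\sigma,\Downarrow)\Rightarrow_G\sigma[x\mapsto v],\delta$ if $x\in\mathrm{dom}(\sigma)$ and $(e,\sigma,\Downarrow)\Rightarrow_{GE}v,\delta$; (F-Seq) $(c_1;c_2,\sigma,\Downarrow)\Rightarrow_G\sigma'',\delta'$ if $(c_1,\sigma,\Downarrow)\Rightarrow_G\sigma',\delta$ and $(c_2,\sigma',\delta)\Rightarrow_G\sigma'',\delta'$; (F-If) $(\mathsf{if}\ e\ c_1\ c_2,\sigma,\Downarrow)\Rightarrow_G\sigma',\delta'$ if $v\ne0$, $(e,\sigma,\Downarrow)\Rightarrow_{GE}v,\delta$ and $(c_1,\sigma,\delta)\Rightarrow_G\sigma',\delta'$; (F-IfZ) $(\mathsf{if}\ e\ c_1\ c_2,\sigma,\Downarrow)\Rightarrow_G\sigma',\delta'$ if $(e,\sigma,\Downarrow)\Rightarrow_{GE}0,\delta$ and $(c_2,\sigma,\delta)\Rightarrow_G\sigma',\delta'$; (F-While) $(\mathsf{while}\ e\ c,\sigma,\Downarrow)\Rightarrow_G\sigma'',\delta''$ if $(e,\sigma,\Downarrow)\Rightarrow_{GE}v,\delta$,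 $v\ne0$, $(c,\sigma,\delta)\Rightarrow_G\sigma',\delta'$ and $(\mathsf{while}\ e\ c,\sigma',\delta')\Rightarrow_G\sigma'',\delta''$; (F-WhileZ) $(\mathsf{while}\ e\ c,\sigma,\Downarrow)\Rightarrow_G\sigma,\delta$ if $(e,\sigma,\Downarrow)\Rightarrow_{GE}0,\delta$; (F-Div) $(c,\sigma,\Uparrow)\Rightarrow_G\sigma',\Uparrow$ for every store $\sigma'$. $\Rightarrow_G$ denotes the inductive interpretation (least relation closed under these rules). *)

theory Defs
  imports Main
begin

type_synonym vname = nat

datatype val = Null | Num nat

datatype binop = Plus | Minus | Times

datatype exp = V val | Var vname | Op binop exp exp

datatype com = Skip | Alloc vname | Assign vname exp | Seq com com
  | If exp com com | While exp com

datatype flag = Conv | Div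

type_synonym store = "vname \<rightharpoonup> val"

fun opsem :: "binop \<Rightarrow> nat \<Rightarrow> nat \<Rightarrow> nat" where
  "opsem Plus a b = a + b"
| "opsem Minus a b = a - b"
| "opsem Times a b = a * b"

inductive evalE :: "exp \<Rightarrow> store \<Rightarrow> flag \<Rightarrow> val \<Rightarrow> flag \<Rightarrow> bool" where
  EVal: "evalE (V v) \<sigma> Conv v Conv"
| EVar: "x \<in> dom \<sigma> \<Longrightarrow> evalE (Var x) \<sigma> Conv (the (\<sigma> x)) Conv"
| EOp: "\<lbrakk>evalE e1 \<sigma> Conv (Num n1) d; evalE e2 \<sigma> d (Num n2) d'\<rbrakk>
        \<Longrightarrow> evalE (Op op e1 e2) \<sigma> Conv (Num (opsem op n1 n2)) d'"
| EDiv: "evalE e \<sigma> Div v Div"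

inductive evalC :: "com \<Rightarrow> store \<Rightarrow> flag \<Rightarrow> store \<Rightarrow> flag \<Rightarrow> bool" where
  FSkip: "evalC Skip \<sigma> Conv \<sigma> Conv"
| FAlloc: "x \<notin> dom \<sigma> \<Longrightarrow> evalC (Alloc x) \<sigma> Conv (\<sigma>(x \<mapsto> Null)) Conv"
| FAssign: "\<lbrakk>x \<in> dom \<sigma>; evalE e \<sigma> Conv v d\<rbrakk> \<Longrightarrow> evalC (Assign x e) \<sigma> Conv (\<sigma>(x \<mapsto> v)) d"
| FSeq: "\<lbrakk>evalC c1 \<sigma> Conv \<sigma>' d; evalC c2 \<sigma>' d \<sigma>'' d'\<rbrakk> \<Longrightarrow> evalC (Seq c1 c2) \<sigma> Conv \<sigma>'' d'"
| FIf: "\<lbrakk>v \<noteq> Num 0; evalE e \<sigma> Conv v d; evalC c1 \<sigma> d \<sigma>' d'\<rbrakk> \<Longrightarrow> evalC (If e c1 c2) \<sigma> Conv \<sigma>' d'"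
| FIfZ: "\<lbrakk>evalE e \<sigma> Conv (Num 0) d; evalC c2 \<sigma> d \<sigma>' d'\<rbrakk> \<Longrightarrow> evalC (If e c1 c2) \<sigma> Conv \<sigma>' d'"
| FWhile: "\<lbrakk>evalE e \<sigma> Conv v d; v \<noteq> Num 0; evalC c \<sigma> d \<sigma>' d';
            evalC (While e c) \<sigma>' d' \<sigma>'' d''\<rbrakk> \<Longrightarrow> evalC (While e c) \<sigma> Conv \<sigma>'' d''"
| FWhileZ: "evalE e \<sigma> Conv (Num 0) d \<Longrightarrow> evalC (While e c) \<sigma> Conv \<sigma> d"
| FDiv: "evalC c \<sigma> Div \<sigma>' Div"

end

theory Submission
  imports Defs
begin

text \<open>Only EDiv and FDiv produce the divergent flag, and both require it as input;
  every other rule threads the flag through its premises, so Conv is propagated.\<close>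

lemma evalE_Conv_preserved: "evalE e \<sigma> d v d' \<Longrightarrow> d = Conv \<Longrightarrow> d' = Conv"
  by (induction rule: evalE.induct) auto

lemma evalC_Conv_preserved: "evalC c \<sigma> d \<sigma>' d' \<Longrightarrow> d = Conv \<Longrightarrow> d' = Conv"
  by (induction rule: evalC.induct) (auto dest: evalE_Conv_preserved)

theorem lemma16:
  fixes c :: com and \<sigma> \<sigma>' :: store and \<delta> :: flag
  assumes "finite (dom \<sigma>)" and "finite (dom \<sigma>')"
    and "evalC c \<sigma> Conv \<sigma>' \<delta>"
  shows "\<delta> \<noteq> Div"
  using evalC_Conv_preserved[OF assms(3)] by simp

end
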